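(* Let $\sigma_X=(\sigma_X^0,\sigma_X[\cdot,\cdot])$ be a memory-one strategy for player $X$, and let $\alpha,\beta,\gamma\in\mathbb{R}$. Suppose there is a bounded measurable function $\psi:S_X\to\mathbb{R}$ such that for every $x\in S_X$ and $y\in S_Y$, $$\alpha u_X(x,y)+\beta u_Y(x,y)+\gamma=\psi(x)-\lambda\int_{S_X}\psi(s)\,d\sigma_X[x,y](s)-(1-\lambda)\int_{S_X}\psi(s)\,d\sigma_X^0(s).$$ Then for every behavioral strategy $\sigma_Y$ of player $Y$, the expected payoffs satisfy $\alpha\pi_X+\beta\pi_Y+\gamma=0$.
   Context: Standing framework. Let $S_X,S_Y$ be measurable spaces (the action spaces of players $X$ and $Y$), $u_X,u_Y:S_X\times S_Y\to\mathbb{R}$ bounded measurable payoff functions, and $\lambda\in(0,1)$ a discount factor. For $T\ge 0$ let $\mathcal{H}^T=(S_X\times S_Y)^T$ be the set of histories of length $T$ (with $\mathcal{H}^0=\{\varnothing\}$) and $\mathcal{H}=\bigsqcup_{T\ge0}\mathcal{H}^T$. A behavioral strategy for $X$ (resp. $Y$) is a Markov kernel $\sigma_X$ from $\mathcal{H}$ to $S_X$ (resp. $\sigma_Y$ from $\mathcal{H}$ to $S_Y$), assigning to each history a probability measure on the action space. A memory-one strategy for $X$ is a behavioral strategy determined by a probability measure $\sigma_X^0$ on $S_X$ (the initial action, used at the empty history) and a Markov kernel $(x,y)\mapsto\sigma_X[x,y]$ from $S_X\times S_Y$ to $S_X$, with $\sigma_X[h^T]=\sigma_X[x_{T-1},y_{T-1}]$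 for $h^T=((x_0,y_0),\dots,(x_{T-1},y_{T-1}))$, $T\ge1$. Given behavioral strategies $\sigma_X,\sigma_Y$, put $\sigma(h)=\sigma_X[h]\otimes\sigma_Y[h]$ (product measure on $S_X\times S_Y$) and define probability measures $\mu_t$ on $\mathcal{H}^{t+1}$ by $\mu_0=\sigma(\varnothing)$ and $\mu_t(E'\times E)=\int_{E'}\sigma(h)(E)\,d\mu_{t-1}(h)$ for measurable $E'\subseteq\mathcal{H}^t$, $E\subseteq S_X\times S_Y$ (uniquely extended). Let $\nu_t(E)=\mu_t(\mathcal{H}^t\times E)$ be the distribution of the action pair at time $t$. The expected payoffs are $\pi_X=(1-\lambda)\sum_{t=0}^\infty\lambda^t\int_{S_X\times S_Y}u_X\,d\nu_t$ and $\pi_Y=(1-\lambda)\sum_{t=0}^\infty\lambda^t\int_{S_X\times S_Y}u_Y\,d\nu_t$. *)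

theory Defs
  imports "HOL-Probability.Probability"
begin

text \<open>Histories of length T are represented as functions h :: nat => 'x * 'y
  on the index set {..<T} (extensional, i.e. elements of PiM), so the space of
  histories of length T is the product measurable space (S_X x S_Y)^T.
  A behavioral strategy is a family, indexed by the length T, of Markov kernels
  from histories of length T to the action space (measurability on the disjoint
  union H is measurability on every piece H^T).\<close>

definition hist_space :: "'x measure \<Rightarrow> 'y measure \<Rightarrow> nat \<Rightarrow> (nat \<Rightarrow> 'x \<times> 'y) measure" where
  "hist_space SX SY T = PiM {..<T} (\<lambda>_. SX \<Otimes>\<^sub>M SY)"

definition behavioral :: "'x measure \<Rightarrow> 'y measure \<Rightarrow> 'a measure
    \<Rightarrow> (nat \<Rightarrow> (nat \<Rightarrow> 'x \<times> 'y) \<Rightarrow> 'a measure) \<Rightarrow> bool" where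
  "behavioral SX SY SA \<sigma> \<longleftrightarrow> (\<forall>T. \<sigma> T \<in> measurable (hist_space SX SY T) (prob_algebra SA))"

definition memory_one :: "'x measure \<Rightarrow> ('x \<Rightarrow> 'y \<Rightarrow> 'x measure)
    \<Rightarrow> nat \<Rightarrow> (nat \<Rightarrow> 'x \<times> 'y) \<Rightarrow> 'x measure" where
  "memory_one \<sigma>0 K T h = (if T = 0 then \<sigma>0 else K (fst (h (T - 1))) (snd (h (T - 1))))"

text \<open>hist_dist T is the distribution of the history of length T;
  the paper's mu_t is hist_dist (Suc t). The recursion
  mu_t(E' x E) = int_{E'} sigma(h)(E) d mu_{t-1}(h) is expressed by the Giry-monad bind.\<close>
fun hist_dist :: "'x measure \<Rightarrow> 'y measure
    \<Rightarrow> (nat \<Rightarrow> (nat \<Rightarrow> 'x \<times> 'y) \<Rightarrow> 'x measure)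
    \<Rightarrow> (nat \<Rightarrow> (nat \<Rightarrow> 'x \<times> 'y) \<Rightarrow> 'y measure)
    \<Rightarrow> nat \<Rightarrow> (nat \<Rightarrow> 'x \<times> 'y) measure" where
  "hist_dist SX SY \<sigma>X \<sigma>Y 0 = return (hist_space SX SY 0) (\<lambda>_. undefined)"
| "hist_dist SX SY \<sigma>X \<sigma>Y (Suc t) =
     bind (hist_dist SX SY \<sigma>X \<sigma>Y t)
       (\<lambda>h. distr (\<sigma>X t h \<Otimes>\<^sub>M \<sigma>Y t h) (hist_space SX SY (Suc t)) (\<lambda>a. h(t := a)))"

definition act_dist :: "'x measure \<Rightarrow> 'y measure
    \<Rightarrow> (nat \<Rightarrow> (nat \<Rightarrow> 'x \<times> 'y) \<Rightarrow> 'x measure)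
    \<Rightarrow> (nat \<Rightarrow> (nat \<Rightarrow> 'x \<times> 'y) \<Rightarrow> 'y measure)
    \<Rightarrow> nat \<Rightarrow> ('x \<times> 'y) measure" where
  "act_dist SX SY \<sigma>X \<sigma>Y t = distr (hist_dist SX SY \<sigma>X \<sigma>Y (Suc t)) (SX \<Otimes>\<^sub>M SY) (\<lambda>h. h t)"

definition payoff :: "'x measure \<Rightarrow> 'y measure
    \<Rightarrow> (nat \<Rightarrow> (nat \<Rightarrow> 'x \<times> 'y) \<Rightarrow> 'x measure)
    \<Rightarrow> (nat \<Rightarrow> (nat \<Rightarrow> 'x \<times> 'y) \<Rightarrow> 'y measure)
    \<Rightarrow> real \<Rightarrow> ('x \<times> 'y \<Rightarrow> real) \<Rightarrow> real" where
  "payoff SX SY \<sigma>X \<sigma>Y d u =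
     (1 - d) * (\<Sum>t. d ^ t * (\<integral>z. u z \<partial>act_dist SX SY \<sigma>X \<sigma>Y t))"

end

theory Submission
  imports Defs
begin

text \<open>Write \<open>a t\<close> for the expectation of \<open>\<psi>\<close> at X's action in round \<open>t\<close>. Since X's
  action in round \<open>t + 1\<close> is drawn from \<open>K x\<^sub>t y\<^sub>t\<close> (and the first one from \<open>\<sigma>0\<close>),
  integrating the hypothesis against the distribution of the round-\<open>t\<close> action pair gives
  \<open>\<alpha> E u\<^sub>X + \<beta> E u\<^sub>Y + \<gamma> = a t - d a (t + 1) - (1 - d) a 0\<close> in every round, whatever Y
  plays. The \<open>d\<close>-discounted average of the right-hand side telescopes to \<open>a 0 - a 0 = 0\<close>.\<close>

lemma summable_power_mult_bounded:
  fixes u :: "nat \<Rightarrow> real"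
  assumes d: "\<bar>d\<bar> < 1" and u: "\<And>t. \<bar>u t\<bar> \<le> B"
  shows "summable (\<lambda>t. d ^ t * u t)"
proof (rule summable_comparison_test)
  show "summable (\<lambda>t. \<bar>d\<bar> ^ t * B)"
    using d by (intro summable_mult2 summable_geometric) auto
  show "\<exists>N. \<forall>t\<ge>N. norm (d ^ t * u t) \<le> \<bar>d\<bar> ^ t * B"
    using u by (auto simp: abs_mult power_abs intro!: mult_left_mono)
qed

lemma power_mult_telescope_sums:
  fixes a :: "nat \<Rightarrow> real"
  assumes d: "\<bar>d\<bar> < 1" and a: "\<And>t. \<bar>a t\<bar> \<le> B"
  shows "(\<lambda>t. d ^ t * (a t - d * a (Suc t))) sums a 0"
proof -
  have "(\<lambda>t. d ^ t * a t) \<longlonglongrightarrow> 0"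
  proof (rule Lim_null_comparison)
    show "\<forall>\<^sub>F t in sequentially. norm (d ^ t * a t) \<le> B * \<bar>d\<bar> ^ t"
      using a by (auto simp: abs_mult power_abs mult.commute intro!: mult_right_mono always_eventually)
    show "(\<lambda>t. B * \<bar>d\<bar> ^ t) \<longlonglongrightarrow> 0"
      using d by (intro tendsto_mult_right_zero LIMSEQ_power_zero) auto
  qed
  from telescope_sums'[OF this] show ?thesis
    by (simp add: algebra_simps)
qed

lemma discounted_combination_eq_zero:
  fixes ux uy a :: "nat \<Rightarrow> real"
  assumes d: "\<bar>d\<bar> < 1"
    and ux: "\<And>t. \<bar>ux t\<bar> \<le> BX" and uy: "\<And>t. \<bar>uy t\<bar> \<le> BY" and a: "\<And>t. \<bar>a t\<bar> \<le> A"
    and stage: "\<And>t. \<alpha> * ux t + \<beta> * uy t + \<gamma> = a t - d * a (Suc t) - (1 - d) * a 0"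
  shows "\<alpha> * ((1 - d) * (\<Sum>t. d ^ t * ux t)) + \<beta> * ((1 - d) * (\<Sum>t. d ^ t * uy t)) + \<gamma> = 0"
proof -
  let ?v = "\<lambda>t. d ^ t * (\<alpha> * ux t + \<beta> * uy t + \<gamma>)"
  have geom: "(\<lambda>t. d ^ t) sums (1 / (1 - d))"
    using d geometric_sums[of d] by simp
  have "(\<lambda>t. \<alpha> * (d ^ t * ux t) + \<beta> * (d ^ t * uy t) + \<gamma> * d ^ t) sums
      (\<alpha> * (\<Sum>t. d ^ t * ux t) + \<beta> * (\<Sum>t. d ^ t * uy t) + \<gamma> * (1 / (1 - d)))"
    using d ux uy geom
    by (intro sums_add sums_mult summable_sums summable_power_mult_bounded) auto
  then have sums_payoffs:
      "?v sums (\<alpha> * (\<Sum>t. d ^ t * ux t) + \<beta> * (\<Sum>t. d ^ t * uy t) + \<gamma> / (1 - d))"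
    by (simp add: algebra_simps)
  have "(\<lambda>t. d ^ t * (a t - d * a (Suc t)) - (1 - d) * a 0 * d ^ t) sums
      (a 0 - (1 - d) * a 0 * (1 / (1 - d)))"
    by (intro sums_diff sums_mult geom power_mult_telescope_sums[OF d a])
  moreover have "a 0 - (1 - d) * a 0 * (1 / (1 - d)) = 0"
    using d by simp
  moreover have "d ^ t * (a t - d * a (Suc t)) - (1 - d) * a 0 * d ^ t = ?v t" for t
    unfolding stage by (simp add: algebra_simps)
  ultimately have "?v sums 0"
    by simp
  then have "\<alpha> * (\<Sum>t. d ^ t * ux t) + \<beta> * (\<Sum>t. d ^ t * uy t) + \<gamma> / (1 - d) = 0"
    using sums_payoffs sums_unique2 by blast
  moreover have "d \<noteq> 1"
    using d by auto
  ultimately show ?thesis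
    by (simp add: field_simps)
qed

lemma
  fixes f :: "'a \<Rightarrow> real"
  assumes M: "M \<in> space (prob_algebra N)" and f: "f \<in> borel_measurable N"
    and bound: "\<And>z. z \<in> space N \<Longrightarrow> \<bar>f z\<bar> \<le> B"
  shows integrable_prob_algebra_bounded: "integrable M f"
    and integral_prob_algebra_abs_le: "\<bar>\<integral>z. f z \<partial>M\<bar> \<le> B"
proof -
  interpret prob_space M
    using M by (simp add: space_prob_algebra)
  have sets: "sets M = sets N"
    using M by (simp add: space_prob_algebra)
  then have space: "space M = space N"
    by (rule sets_eq_imp_space_eq)
  show int: "integrable M f"
    using f bound sets space
    by (intro integrable_const_bound[where B=B]) (auto cong: measurable_cong_sets)
  have "-B \<le> (\<integral>z. f z \<partial>M)" "(\<integral>z. f z \<partial>M) \<le> B"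
    using bound space
    by (auto intro!: integral_ge_const integral_le_const int AE_I2 simp: abs_le_iff minus_le_iff)
  then show "\<bar>\<integral>z. f z \<partial>M\<bar> \<le> B"
    by linarith
qed

lemma integral_affine_prob_algebra:
  fixes f g :: "'a \<Rightarrow> real"
  assumes M: "M \<in> space (prob_algebra N)"
    and f: "f \<in> borel_measurable N" "\<And>z. z \<in> space N \<Longrightarrow> \<bar>f z\<bar> \<le> Bf"
    and g: "g \<in> borel_measurable N" "\<And>z. z \<in> space N \<Longrightarrow> \<bar>g z\<bar> \<le> Bg"
  shows "(\<integral>z. \<alpha> * f z + \<beta> * g z + \<gamma> \<partial>M) = \<alpha> * (\<integral>z. f z \<partial>M) + \<beta> * (\<integral>z. g z \<partial>M) + \<gamma>"
proof -
  interpret prob_space M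
    using M by (simp add: space_prob_algebra)
  show ?thesis
    using integrable_prob_algebra_bounded[OF M f] integrable_prob_algebra_bounded[OF M g]
    by (simp add: prob_space)
qed

lemma integral_bind_prob_algebra:
  fixes f :: "'b \<Rightarrow> real"
  assumes A: "A \<in> space (prob_algebra M)" and B: "B \<in> M \<rightarrow>\<^sub>M prob_algebra N"
    and f: "f \<in> borel_measurable N" "\<And>z. z \<in> space N \<Longrightarrow> \<bar>f z\<bar> \<le> C"
  shows "(\<integral>z. f z \<partial>(A \<bind> B)) = (\<integral>x. (\<integral>z. f z \<partial>B x) \<partial>A)"
proof (rule integral_bind[OF f])
  have sets: "sets A = sets M"
    using A by (simp add: space_prob_algebra)
  then show "B \<in> A \<rightarrow>\<^sub>M subprob_algebra N"
    using measurable_prob_algebraD[OF B] by (simp cong: measurable_cong_sets)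
  show "finite_measure A"
    using A by (simp add: space_prob_algebra prob_space_def)
  have "prob_space (B x)" if "x \<in> space A" for x
    using measurable_space[OF B, of x] that sets_eq_imp_space_eq[OF sets]
    by (simp add: space_prob_algebra)
  then show "AE x in A. emeasure (B x) (space (B x)) \<le> ennreal 1"
    by (auto intro!: AE_I2 simp: prob_space.emeasure_space_1)
qed

lemma (in prob_space) integral_pair_fst:
  fixes f :: "'b \<Rightarrow> real"
  assumes f: "f \<in> borel_measurable N"
  shows "(\<integral>z. f (fst z) \<partial>(N \<Otimes>\<^sub>M M)) = (\<integral>x. f x \<partial>N)"
proof -
  have "(\<integral>z. f (fst z) \<partial>(N \<Otimes>\<^sub>M M)) = (\<integral>x. f x \<partial>distr (N \<Otimes>\<^sub>M M) N fst)"
    using f by (intro integral_distr[symmetric]) auto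
  then show ?thesis
    by (simp add: distr_pair_fst)
qed

lemma measurable_hist_component:
  "t < T \<Longrightarrow> (\<lambda>h. h t) \<in> hist_space SX SY T \<rightarrow>\<^sub>M SX \<Otimes>\<^sub>M SY"
  unfolding hist_space_def by (rule measurable_component_singleton) simp

lemma measurable_hist_extend:
  "(\<lambda>(h, a). h(T := a)) \<in> hist_space SX SY T \<Otimes>\<^sub>M (SX \<Otimes>\<^sub>M SY) \<rightarrow>\<^sub>M hist_space SX SY (Suc T)"
proof -
  have "insert T {..<T} = {..<Suc T}"
    by auto
  then show ?thesis
    unfolding hist_space_def using measurable_add_dim[of T "{..<T}" "\<lambda>_. SX \<Otimes>\<^sub>M SY"] by simp
qed

locale memory_one_play =
  fixes SX :: "'x measure" and SY :: "'y measure"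
    and \<sigma>0 :: "'x measure" and K :: "'x \<Rightarrow> 'y \<Rightarrow> 'x measure"
    and \<sigma>Y :: "nat \<Rightarrow> (nat \<Rightarrow> 'x \<times> 'y) \<Rightarrow> 'y measure"
  assumes \<sigma>0: "\<sigma>0 \<in> space (prob_algebra SX)"
    and K: "(\<lambda>(x, y). K x y) \<in> SX \<Otimes>\<^sub>M SY \<rightarrow>\<^sub>M prob_algebra SX"
    and \<sigma>Y: "behavioral SX SY SY \<sigma>Y"
begin

abbreviation \<sigma>X where "\<sigma>X \<equiv> memory_one \<sigma>0 K"
abbreviation H where "H \<equiv> hist_dist SX SY \<sigma>X \<sigma>Y"
abbreviation \<nu> where "\<nu> \<equiv> act_dist SX SY \<sigma>X \<sigma>Y"
abbreviation step where
  "step t h \<equiv> distr (\<sigma>X t h \<Otimes>\<^sub>M \<sigma>Y t h) (hist_space SX SY (Suc t)) (\<lambda>a. h(t := a))"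

lemma measurable_\<sigma>X: "\<sigma>X t \<in> hist_space SX SY t \<rightarrow>\<^sub>M prob_algebra SX"
proof (cases t)
  case 0
  then have "\<sigma>X t = (\<lambda>_. \<sigma>0)"
    by (simp add: memory_one_def fun_eq_iff)
  then show ?thesis
    using \<sigma>0 by simp
next
  case (Suc s)
  then have "\<sigma>X t = (\<lambda>h. (\<lambda>(x, y). K x y) (h s))"
    by (auto simp: memory_one_def fun_eq_iff split: prod.split)
  then show ?thesis
    using measurable_compose[OF measurable_hist_component[of s t] K] Suc by simp
qed

lemma measurable_\<sigma>Y: "\<sigma>Y t \<in> hist_space SX SY t \<rightarrow>\<^sub>M prob_algebra SY"
  using \<sigma>Y by (simp add: behavioral_def)

lemma measurable_step: "step t \<in> hist_space SX SY t \<rightarrow>\<^sub>M prob_algebra (hist_space SX SY (Suc t))"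
  by (rule measurable_distr_prob_space2[OF measurable_pair_prob[OF measurable_\<sigma>X measurable_\<sigma>Y]
        measurable_hist_extend])

lemma hist_dist_prob: "H t \<in> space (prob_algebra (hist_space SX SY t))"
proof (induction t)
  case 0
  have "(\<lambda>_. undefined) \<in> space (hist_space SX SY 0)"
    by (simp add: hist_space_def space_PiM)
  then show ?case
    by (simp add: space_prob_algebra prob_space_return)
next
  case (Suc t)
  then show ?case
    using prob_space_bind'[OF Suc measurable_step] sets_bind'[OF Suc measurable_step]
    by (simp add: space_prob_algebra)
qed

lemma measurable_hist_component_hist_dist:
  "t < T \<Longrightarrow> (\<lambda>h. h t) \<in> H T \<rightarrow>\<^sub>M SX \<Otimes>\<^sub>M SY"
  using measurable_hist_component[of t T SX SY] hist_dist_prob[of T]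
  by (simp add: space_prob_algebra cong: measurable_cong_sets del: hist_dist.simps)

lemma act_dist_prob: "\<nu> t \<in> space (prob_algebra (SX \<Otimes>\<^sub>M SY))"
  using prob_space.prob_space_distr[OF _ measurable_hist_component_hist_dist[of t "Suc t"]]
    hist_dist_prob[of "Suc t"]
  by (simp add: act_dist_def space_prob_algebra del: hist_dist.simps)

lemma integral_act_dist:
  fixes f :: "'x \<times> 'y \<Rightarrow> real"
  assumes "f \<in> borel_measurable (SX \<Otimes>\<^sub>M SY)"
  shows "(\<integral>z. f z \<partial>\<nu> t) = (\<integral>h. f (h t) \<partial>H (Suc t))"
  unfolding act_dist_def
  by (rule integral_distr[OF measurable_hist_component_hist_dist assms]) simp

lemma integral_step:
  fixes f :: "'x \<times> 'y \<Rightarrow> real"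
  assumes f: "f \<in> borel_measurable (SX \<Otimes>\<^sub>M SY)" and h: "h \<in> space (hist_space SX SY t)"
  shows "(\<integral>g. f (g t) \<partial>step t h) = (\<integral>z. f z \<partial>(\<sigma>X t h \<Otimes>\<^sub>M \<sigma>Y t h))"
proof -
  have "sets (\<sigma>X t h \<Otimes>\<^sub>M \<sigma>Y t h) = sets (SX \<Otimes>\<^sub>M SY)"
    using measurable_space[OF measurable_\<sigma>X h] measurable_space[OF measurable_\<sigma>Y h]
    by (intro sets_pair_measure_cong) (simp_all add: space_prob_algebra)
  moreover have "(\<lambda>a. h(t := a)) \<in> SX \<Otimes>\<^sub>M SY \<rightarrow>\<^sub>M hist_space SX SY (Suc t)"
    using measurable_Pair2[OF measurable_hist_extend h] by simp
  ultimately have "(\<lambda>a. h(t := a)) \<in> \<sigma>X t h \<Otimes>\<^sub>M \<sigma>Y t h \<rightarrow>\<^sub>M hist_space SX SY (Suc t)"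
    by (simp cong: measurable_cong_sets)
  moreover have "(\<lambda>g. f (g t)) \<in> borel_measurable (hist_space SX SY (Suc t))"
    using measurable_compose[OF measurable_hist_component[of t "Suc t"] f] by simp
  ultimately show ?thesis
    by (simp add: integral_distr)
qed

lemma integral_hist_dist_Suc:
  fixes f :: "'x \<times> 'y \<Rightarrow> real"
  assumes f: "f \<in> borel_measurable (SX \<Otimes>\<^sub>M SY)" "\<And>z. z \<in> space (SX \<Otimes>\<^sub>M SY) \<Longrightarrow> \<bar>f z\<bar> \<le> B"
  shows "(\<integral>h. f (h t) \<partial>H (Suc t)) = (\<integral>h. (\<integral>z. f z \<partial>(\<sigma>X t h \<Otimes>\<^sub>M \<sigma>Y t h)) \<partial>H t)"
proof -
  have "(\<integral>h. f (h t) \<partial>H (Suc t)) = (\<integral>h. (\<integral>g. f (g t) \<partial>step t h) \<partial>H t)"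
    unfolding hist_dist.simps
  proof (rule integral_bind_prob_algebra[OF hist_dist_prob measurable_step])
    show "(\<lambda>g. f (g t)) \<in> borel_measurable (hist_space SX SY (Suc t))"
      using measurable_compose[OF measurable_hist_component[of t "Suc t"] f(1)] by simp
    show "\<bar>f (g t)\<bar> \<le> B" if "g \<in> space (hist_space SX SY (Suc t))" for g
      using f(2) measurable_space[OF measurable_hist_component that] by simp
  qed
  also have "\<dots> = (\<integral>h. (\<integral>z. f z \<partial>(\<sigma>X t h \<Otimes>\<^sub>M \<sigma>Y t h)) \<partial>H t)"
    using hist_dist_prob[of t] sets_eq_imp_space_eq
    by (intro Bochner_Integration.integral_cong refl integral_step f)
      (auto simp: space_prob_algebra simp del: hist_dist.simps)
  finally show ?thesis .
qed

lemma integral_act_dist_fst: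
  fixes \<psi> :: "'x \<Rightarrow> real"
  assumes \<psi>: "\<psi> \<in> borel_measurable SX" "\<And>x. x \<in> space SX \<Longrightarrow> \<bar>\<psi> x\<bar> \<le> B"
  shows "(\<integral>z. \<psi> (fst z) \<partial>\<nu> t) = (\<integral>h. (\<integral>x. \<psi> x \<partial>\<sigma>X t h) \<partial>H t)"
proof -
  have \<psi>_fst: "(\<lambda>z. \<psi> (fst z)) \<in> borel_measurable (SX \<Otimes>\<^sub>M SY)"
    using \<psi>(1) by measurable
  have "(\<integral>z. \<psi> (fst z) \<partial>\<nu> t) = (\<integral>h. \<psi> (fst (h t)) \<partial>H (Suc t))"
    by (rule integral_act_dist[OF \<psi>_fst])
  also have "\<dots> = (\<integral>h. (\<integral>z. \<psi> (fst z) \<partial>(\<sigma>X t h \<Otimes>\<^sub>M \<sigma>Y t h)) \<partial>H t)"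
    by (rule integral_hist_dist_Suc[OF \<psi>_fst]) (use \<psi>(2) in \<open>auto simp: space_pair_measure\<close>)
  also have "\<dots> = (\<integral>h. (\<integral>x. \<psi> x \<partial>\<sigma>X t h) \<partial>H t)"
  proof (rule Bochner_Integration.integral_cong[OF refl])
    fix h assume "h \<in> space (H t)"
    then have h: "h \<in> space (hist_space SX SY t)"
      using hist_dist_prob[of t] sets_eq_imp_space_eq
      by (auto simp: space_prob_algebra simp del: hist_dist.simps)
    have "sets (\<sigma>X t h) = sets SX"
      using measurable_space[OF measurable_\<sigma>X h] by (simp add: space_prob_algebra)
    moreover have "prob_space (\<sigma>Y t h)"
      using measurable_space[OF measurable_\<sigma>Y h] by (simp add: space_prob_algebra)
    ultimately show "(\<integral>z. \<psi> (fst z) \<partial>(\<sigma>X t h \<Otimes>\<^sub>M \<sigma>Y t h)) = (\<integral>x. \<psi> x \<partial>\<sigma>X t h)"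
      using \<psi>(1) by (simp add: prob_space.integral_pair_fst cong: measurable_cong_sets)
  qed
  finally show ?thesis .
qed

lemma integral_act_dist_fst_0:
  fixes \<psi> :: "'x \<Rightarrow> real"
  assumes "\<psi> \<in> borel_measurable SX" "\<And>x. x \<in> space SX \<Longrightarrow> \<bar>\<psi> x\<bar> \<le> B"
  shows "(\<integral>z. \<psi> (fst z) \<partial>\<nu> 0) = (\<integral>x. \<psi> x \<partial>\<sigma>0)"
proof -
  have "prob_space (H 0)"
    using hist_dist_prob[of 0] by (simp add: space_prob_algebra del: hist_dist.simps)
  then show ?thesis
    by (simp add: integral_act_dist_fst[OF assms] memory_one_def prob_space.prob_space
        del: hist_dist.simps)
qed

lemma borel_measurable_integral_K:
  fixes \<psi> :: "'x \<Rightarrow> real"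
  assumes "\<psi> \<in> borel_measurable SX"
  shows "(\<lambda>z. \<integral>x. \<psi> x \<partial>K (fst z) (snd z)) \<in> borel_measurable (SX \<Otimes>\<^sub>M SY)"
  using measurable_compose[OF measurable_prob_algebraD[OF K]
      integral_measurable_subprob_algebra[OF assms]]
  by (simp add: case_prod_beta)

lemma integral_act_dist_fst_Suc:
  fixes \<psi> :: "'x \<Rightarrow> real"
  assumes \<psi>: "\<psi> \<in> borel_measurable SX" "\<And>x. x \<in> space SX \<Longrightarrow> \<bar>\<psi> x\<bar> \<le> B"
  shows "(\<integral>z. \<psi> (fst z) \<partial>\<nu> (Suc t)) = (\<integral>z. (\<integral>x. \<psi> x \<partial>K (fst z) (snd z)) \<partial>\<nu> t)"
proof -
  have "(\<integral>z. \<psi> (fst z) \<partial>\<nu> (Suc t)) = (\<integral>h. (\<integral>x. \<psi> x \<partial>K (fst (h t)) (snd (h t))) \<partial>H (Suc t))"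
    by (simp add: integral_act_dist_fst[OF \<psi>] memory_one_def del: hist_dist.simps)
  also have "\<dots> = (\<integral>z. (\<integral>x. \<psi> x \<partial>K (fst z) (snd z)) \<partial>\<nu> t)"
    by (rule integral_act_dist[OF borel_measurable_integral_K[OF \<psi>(1)], symmetric])
  finally show ?thesis .
qed

lemma expected_stage_identity:
  fixes uX uY :: "'x \<times> 'y \<Rightarrow> real" and \<psi> :: "'x \<Rightarrow> real"
  assumes uX: "uX \<in> borel_measurable (SX \<Otimes>\<^sub>M SY)" "\<And>z. z \<in> space (SX \<Otimes>\<^sub>M SY) \<Longrightarrow> \<bar>uX z\<bar> \<le> BX"
    and uY: "uY \<in> borel_measurable (SX \<Otimes>\<^sub>M SY)" "\<And>z. z \<in> space (SX \<Otimes>\<^sub>M SY) \<Longrightarrow> \<bar>uY z\<bar> \<le> BY"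
    and \<psi>: "\<psi> \<in> borel_measurable SX" "\<And>x. x \<in> space SX \<Longrightarrow> \<bar>\<psi> x\<bar> \<le> B\<psi>"
    and eq: "\<And>x y. x \<in> space SX \<Longrightarrow> y \<in> space SY \<Longrightarrow>
      \<alpha> * uX (x, y) + \<beta> * uY (x, y) + \<gamma> =
        \<psi> x - d * (\<integral>s. \<psi> s \<partial>K x y) - (1 - d) * (\<integral>s. \<psi> s \<partial>\<sigma>0)"
  shows "\<alpha> * (\<integral>z. uX z \<partial>\<nu> t) + \<beta> * (\<integral>z. uY z \<partial>\<nu> t) + \<gamma> =
    (\<integral>z. \<psi> (fst z) \<partial>\<nu> t) - d * (\<integral>z. \<psi> (fst z) \<partial>\<nu> (Suc t)) - (1 - d) * (\<integral>z. \<psi> (fst z) \<partial>\<nu> 0)"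
proof -
  define g where "g z = (\<integral>s. \<psi> s \<partial>K (fst z) (snd z))" for z
  have g_bound: "\<bar>g z\<bar> \<le> B\<psi>" if "z \<in> space (SX \<Otimes>\<^sub>M SY)" for z
    unfolding g_def
    by (rule integral_prob_algebra_abs_le[OF _ \<psi>])
      (use measurable_space[OF K that] in \<open>simp add: case_prod_beta\<close>)
  have \<psi>_fst: "(\<lambda>z. \<psi> (fst z)) \<in> borel_measurable (SX \<Otimes>\<^sub>M SY)"
    using \<psi>(1) by measurable
  have \<psi>_fst_bound: "\<bar>\<psi> (fst z)\<bar> \<le> B\<psi>" if "z \<in> space (SX \<Otimes>\<^sub>M SY)" for z
    using that \<psi>(2) by (auto simp: space_pair_measure)
  have "\<alpha> * (\<integral>z. uX z \<partial>\<nu> t) + \<beta> * (\<integral>z. uY z \<partial>\<nu> t) + \<gamma> =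
      (\<integral>z. \<alpha> * uX z + \<beta> * uY z + \<gamma> \<partial>\<nu> t)"
    by (rule integral_affine_prob_algebra[OF act_dist_prob uX uY, symmetric])
  \<comment> \<open>the integrand is put in the shape of \<open>integral_affine_prob_algebra\<close>\<close>
  also have "\<dots> = (\<integral>z. 1 * \<psi> (fst z) + (- d) * g z + (- (1 - d) * (\<integral>s. \<psi> s \<partial>\<sigma>0)) \<partial>\<nu> t)"
  proof (rule Bochner_Integration.integral_cong[OF refl])
    fix z assume z: "z \<in> space (\<nu> t)"
    have "space (\<nu> t) = space SX \<times> space SY"
      using act_dist_prob[of t] sets_eq_imp_space_eq[of "\<nu> t" "SX \<Otimes>\<^sub>M SY"]
      by (simp add: space_prob_algebra space_pair_measure)
    then have "fst z \<in> space SX" "snd z \<in> space SY"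
      using z by (simp_all add: mem_Times_iff)
    then show "\<alpha> * uX z + \<beta> * uY z + \<gamma> = 1 * \<psi> (fst z) + (- d) * g z + (- (1 - d) * (\<integral>s. \<psi> s \<partial>\<sigma>0))"
      using eq[of "fst z" "snd z"] by (simp add: g_def algebra_simps)
  qed
  also have "\<dots> = 1 * (\<integral>z. \<psi> (fst z) \<partial>\<nu> t) + (- d) * (\<integral>z. g z \<partial>\<nu> t)
      + (- (1 - d) * (\<integral>s. \<psi> s \<partial>\<sigma>0))"
    by (rule integral_affine_prob_algebra[OF act_dist_prob \<psi>_fst \<psi>_fst_bound
        borel_measurable_integral_K[OF \<psi>(1), folded g_def] g_bound])
  also have "\<dots> = (\<integral>z. \<psi> (fst z) \<partial>\<nu> t) - d * (\<integral>z. \<psi> (fst z) \<partial>\<nu> (Suc t))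
      - (1 - d) * (\<integral>z. \<psi> (fst z) \<partial>\<nu> 0)"
    by (simp add: g_def integral_act_dist_fst_Suc[OF \<psi>] integral_act_dist_fst_0[OF \<psi>] algebra_simps)
  finally show ?thesis .
qed

end

theorem theorem1:
  fixes SX :: "'x measure" and SY :: "'y measure"
    and uX uY :: "'x \<times> 'y \<Rightarrow> real" and d :: real
    and \<sigma>0 :: "'x measure" and K :: "'x \<Rightarrow> 'y \<Rightarrow> 'x measure"
    and \<alpha> \<beta> \<gamma> :: real and \<psi> :: "'x \<Rightarrow> real"
    and \<sigma>Y :: "nat \<Rightarrow> (nat \<Rightarrow> 'x \<times> 'y) \<Rightarrow> 'y measure"
  assumes d: "0 < d" "d < 1"
    and uX_meas: "uX \<in> borel_measurable (SX \<Otimes>\<^sub>M SY)"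
    and uX_bdd: "\<exists>B. \<forall>z\<in>space (SX \<Otimes>\<^sub>M SY). \<bar>uX z\<bar> \<le> B"
    and uY_meas: "uY \<in> borel_measurable (SX \<Otimes>\<^sub>M SY)"
    and uY_bdd: "\<exists>B. \<forall>z\<in>space (SX \<Otimes>\<^sub>M SY). \<bar>uY z\<bar> \<le> B"
    and \<sigma>0: "\<sigma>0 \<in> space (prob_algebra SX)"
    and K: "(\<lambda>(x, y). K x y) \<in> measurable (SX \<Otimes>\<^sub>M SY) (prob_algebra SX)"
    and \<psi>_meas: "\<psi> \<in> borel_measurable SX"
    and \<psi>_bdd: "\<exists>B. \<forall>x\<in>space SX. \<bar>\<psi> x\<bar> \<le> B"
    and eq: "\<forall>x\<in>space SX. \<forall>y\<in>space SY.
      \<alpha> * uX (x, y) + \<beta> * uY (x, y) + \<gamma> =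
        \<psi> x - d * (\<integral>s. \<psi> s \<partial>K x y) - (1 - d) * (\<integral>s. \<psi> s \<partial>\<sigma>0)"
    and \<sigma>Y: "behavioral SX SY SY \<sigma>Y"
  shows "\<alpha> * payoff SX SY (memory_one \<sigma>0 K) \<sigma>Y d uX
       + \<beta> * payoff SX SY (memory_one \<sigma>0 K) \<sigma>Y d uY + \<gamma> = 0"
proof -
  interpret memory_one_play SX SY \<sigma>0 K \<sigma>Y
    using \<sigma>0 K \<sigma>Y by unfold_locales
  obtain BX where BX: "\<And>z. z \<in> space (SX \<Otimes>\<^sub>M SY) \<Longrightarrow> \<bar>uX z\<bar> \<le> BX"
    using uX_bdd by blast
  obtain BY where BY: "\<And>z. z \<in> space (SX \<Otimes>\<^sub>M SY) \<Longrightarrow> \<bar>uY z\<bar> \<le> BY"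
    using uY_bdd by blast
  obtain B\<psi> where B\<psi>: "\<And>x. x \<in> space SX \<Longrightarrow> \<bar>\<psi> x\<bar> \<le> B\<psi>"
    using \<psi>_bdd by blast
  have "\<alpha> * ((1 - d) * (\<Sum>t. d ^ t * (\<integral>z. uX z \<partial>\<nu> t)))
      + \<beta> * ((1 - d) * (\<Sum>t. d ^ t * (\<integral>z. uY z \<partial>\<nu> t))) + \<gamma> = 0"
  proof (rule discounted_combination_eq_zero[where a = "\<lambda>t. \<integral>z. \<psi> (fst z) \<partial>\<nu> t"])
    show "\<bar>d\<bar> < 1"
      using d by simp
    show "\<bar>\<integral>z. uX z \<partial>\<nu> t\<bar> \<le> BX" "\<bar>\<integral>z. uY z \<partial>\<nu> t\<bar> \<le> BY" for t
      using integral_prob_algebra_abs_le[OF act_dist_prob] uX_meas uY_meas BX BY by blast+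
    show "\<bar>\<integral>z. \<psi> (fst z) \<partial>\<nu> t\<bar> \<le> B\<psi>" for t
      using integral_prob_algebra_abs_le[OF act_dist_prob] \<psi>_meas B\<psi>
      by (auto simp: space_pair_measure)
    show "\<alpha> * (\<integral>z. uX z \<partial>\<nu> t) + \<beta> * (\<integral>z. uY z \<partial>\<nu> t) + \<gamma> =
        (\<integral>z. \<psi> (fst z) \<partial>\<nu> t) - d * (\<integral>z. \<psi> (fst z) \<partial>\<nu> (Suc t)) - (1 - d) * (\<integral>z. \<psi> (fst z) \<partial>\<nu> 0)"
      for t
      by (rule expected_stage_identity[OF uX_meas BX uY_meas BY \<psi>_meas B\<psi>]) (use eq in auto)
  qed
  then show ?thesis
    by (simp add: payoff_def)
qed

end
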